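(* Let $\Gamma=(N,A,u)$ be a finite game and $\mu\in\Delta A$. Then $\mu$ is directly implementable if and only if $\mu\in\mathcal{I}$, where $\mathcal{I}=\bigcup_{q\in\mathrm{CE}(\Gamma)}\mathcal{I}_q$ and $\mathcal{I}_q=\{\mu'\in\Delta A:\mathrm{supp}(\mu')\subseteq\mathrm{supp}(q),\ \mathbb{E}_{\mu'}[\log q]=\mathbb{E}_q[\log q]\}$.
   Context: A finite game $\Gamma=(N,A,u)$ has a finite set of players $N$, finite action sets $A_i$, $A=\times_iA_i$, utilities $u_i:A\to\mathbb{R}$ (extended multilinearly to mixed profiles). $\mathrm{CE}(\Gamma)$ is the set of correlated equilibria: $p\in\Delta A$ such that for all $i$, all $a_i$ with $\sum_{a_{-i}}p_{a_i,a_{-i}}>0$, all $b\in A_i$, $\sum_{a_{-i}}p_{a_i,a_{-i}}[u_i(a_i,a_{-i})-u_i(b,a_{-i})]\ge0$. Convention $0\log0=0$. A partially specified data-generating process is $\mathcal{D}=(M,\eta,\mathcal{F})$ with $M=\times_iM_i$ finite, $\eta\in\Delta M$, $\mathcal{F}\subseteq\{f:M\to\mathbb{R}\}$; with $\Delta_{\mathcal{D}}=\{q\in\Delta M:\sum_mq_mf(m)=\sum_m\eta_mf(m)\ \forall f\in\mathcal{F}\}$, the belief is the unique maximizer $q$ of $-\sum_mq_m\log q_m$ over $\Delta_{\mathcal{D}}$. A strategy profile is $\sigma=(\sigma_i)$, $\sigma_i:M_i\to\Delta A_i$, $\sigma(a\mid m)=\prod_i\sigma_i(a_i\mid m_i)$,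 $(\eta\circ\sigma)(a)=\sum_m\eta_m\sigma(a\mid m)$. $\mu$ is implemented by $\mathcal{D}$ via $\sigma$ if (i) $q$ is the maximum-entropy belief; (ii) for all $i$, all $m_i$ with positive $q$-marginal, all $a_i'$: $\sum_{m_{-i}}q_{m_i,m_{-i}}[u_i(\sigma_i(m_i),\sigma_{-i}(m_{-i}))-u_i(a_i',\sigma_{-i}(m_{-i}))]\ge0$; (iii) $\mu=\eta\circ\sigma$. An outcome $\mu$ is directly implementable if it is implemented in this sense by some $\mathcal{D}=(M,\eta,\mathcal{F})$ with $M=A$ (i.e. $M_i=A_i$) and obedient strategies $\sigma_i(a_i)=$ the point mass on $a_i$ for every $i$. *)

theory Defs
  imports Complex_Main "HOL-Library.FuncSet"
begin

definition finite_game :: "'i set \<Rightarrow> ('i \<Rightarrow> 'a set) \<Rightarrow> bool" where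
  "finite_game N A \<longleftrightarrow> finite N \<and> (\<forall>i\<in>N. finite (A i) \<and> A i \<noteq> {})"

definition dist_on :: "'x set \<Rightarrow> ('x \<Rightarrow> real) \<Rightarrow> bool" where
  "dist_on S p \<longleftrightarrow> (\<forall>x. 0 \<le> p x) \<and> (\<forall>x. x \<notin> S \<longrightarrow> p x = 0) \<and> sum p S = 1"

definition supp :: "('x \<Rightarrow> real) \<Rightarrow> 'x set" where
  "supp p = {x. p x \<noteq> 0}"

definition CE :: "'i set \<Rightarrow> ('i \<Rightarrow> 'a set) \<Rightarrow> ('i \<Rightarrow> ('i \<Rightarrow> 'a) \<Rightarrow> real)
    \<Rightarrow> (('i \<Rightarrow> 'a) \<Rightarrow> real) set" where
  "CE N A u = {p. dist_on (PiE N A) p \<and>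
     (\<forall>i\<in>N. \<forall>ai\<in>A i. (\<Sum>a\<in>{a\<in>PiE N A. a i = ai}. p a) > 0 \<longrightarrow>
        (\<forall>b\<in>A i. (\<Sum>a\<in>{a\<in>PiE N A. a i = ai}. p a * (u i a - u i (a(i := b)))) \<ge> 0))}"

definition I_q :: "'i set \<Rightarrow> ('i \<Rightarrow> 'a set) \<Rightarrow> (('i \<Rightarrow> 'a) \<Rightarrow> real)
    \<Rightarrow> (('i \<Rightarrow> 'a) \<Rightarrow> real) set" where
  "I_q N A q = {\<mu>'. dist_on (PiE N A) \<mu>' \<and> supp \<mu>' \<subseteq> supp q \<and>
     (\<Sum>a\<in>PiE N A. \<mu>' a * ln (q a)) = (\<Sum>a\<in>PiE N A. q a * ln (q a))}"

definition I_set :: "'i set \<Rightarrow> ('i \<Rightarrow> 'a set) \<Rightarrow> ('i \<Rightarrow> ('i \<Rightarrow> 'a) \<Rightarrow> real)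
    \<Rightarrow> (('i \<Rightarrow> 'a) \<Rightarrow> real) set" where
  "I_set N A u = (\<Union>q\<in>CE N A u. I_q N A q)"

text \<open>Multilinear extension of utilities to mixed profiles tau (tau j is a
  distribution over A j).\<close>
definition mixed_util :: "'i set \<Rightarrow> ('i \<Rightarrow> 'a set) \<Rightarrow> ('i \<Rightarrow> ('i \<Rightarrow> 'a) \<Rightarrow> real)
    \<Rightarrow> 'i \<Rightarrow> ('i \<Rightarrow> 'a \<Rightarrow> real) \<Rightarrow> real" where
  "mixed_util N A u i \<tau> = (\<Sum>a\<in>PiE N A. (\<Prod>j\<in>N. \<tau> j (a j)) * u i a)"

definition point_mass :: "'x \<Rightarrow> 'x \<Rightarrow> real" where
  "point_mass x = (\<lambda>y. if y = x then 1 else 0)"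

text \<open>Entropy (with 0 log 0 = 0, automatic since ln 0 = 0 in Isabelle).\<close>
definition entropy :: "'x set \<Rightarrow> ('x \<Rightarrow> real) \<Rightarrow> real" where
  "entropy S q = - (\<Sum>m\<in>S. q m * ln (q m))"

definition Delta_D :: "'i set \<Rightarrow> ('i \<Rightarrow> 'm set) \<Rightarrow> (('i \<Rightarrow> 'm) \<Rightarrow> real)
    \<Rightarrow> (('i \<Rightarrow> 'm) \<Rightarrow> real) set \<Rightarrow> (('i \<Rightarrow> 'm) \<Rightarrow> real) set" where
  "Delta_D N M \<eta> F = {q. dist_on (PiE N M) q \<and>
     (\<forall>f\<in>F. (\<Sum>m\<in>PiE N M. q m * f m) = (\<Sum>m\<in>PiE N M. \<eta> m * f m))}"

definition maxent_belief :: "'i set \<Rightarrow> ('i \<Rightarrow> 'm set) \<Rightarrow> (('i \<Rightarrow> 'm) \<Rightarrow> real)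
    \<Rightarrow> (('i \<Rightarrow> 'm) \<Rightarrow> real) set \<Rightarrow> (('i \<Rightarrow> 'm) \<Rightarrow> real) \<Rightarrow> bool" where
  "maxent_belief N M \<eta> F q \<longleftrightarrow> q \<in> Delta_D N M \<eta> F \<and>
     (\<forall>q'\<in>Delta_D N M \<eta> F. q' \<noteq> q \<longrightarrow> entropy (PiE N M) q' < entropy (PiE N M) q)"

definition implements ::
  "'i set \<Rightarrow> ('i \<Rightarrow> 'a set) \<Rightarrow> ('i \<Rightarrow> ('i \<Rightarrow> 'a) \<Rightarrow> real)
   \<Rightarrow> ('i \<Rightarrow> 'm set) \<Rightarrow> (('i \<Rightarrow> 'm) \<Rightarrow> real) \<Rightarrow> (('i \<Rightarrow> 'm) \<Rightarrow> real) set
   \<Rightarrow> ('i \<Rightarrow> 'm \<Rightarrow> 'a \<Rightarrow> real) \<Rightarrow> (('i \<Rightarrow> 'a) \<Rightarrow> real) \<Rightarrow> bool" where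
  "implements N A u M \<eta> F \<sigma> \<mu> \<longleftrightarrow>
     (\<forall>i\<in>N. finite (M i) \<and> M i \<noteq> {}) \<and> dist_on (PiE N M) \<eta> \<and>
     (\<forall>i\<in>N. \<forall>mi\<in>M i. dist_on (A i) (\<sigma> i mi)) \<and>
     (\<exists>q. maxent_belief N M \<eta> F q \<and>
        (\<forall>i\<in>N. \<forall>mi\<in>M i. (\<Sum>m\<in>{m\<in>PiE N M. m i = mi}. q m) > 0 \<longrightarrow>
           (\<forall>a'\<in>A i. (\<Sum>m\<in>{m\<in>PiE N M. m i = mi}.
               q m * (mixed_util N A u i (\<lambda>j. \<sigma> j (m j))
                      - mixed_util N A u i ((\<lambda>j. \<sigma> j (m j))(i := point_mass a')))) \<ge> 0))) \<and>
     (\<forall>a\<in>PiE N A. \<mu> a = (\<Sum>m\<in>PiE N M. \<eta> m * (\<Prod>j\<in>N. \<sigma> j (m j) (a j))))"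

definition directly_implementable ::
  "'i set \<Rightarrow> ('i \<Rightarrow> 'a set) \<Rightarrow> ('i \<Rightarrow> ('i \<Rightarrow> 'a) \<Rightarrow> real) \<Rightarrow> (('i \<Rightarrow> 'a) \<Rightarrow> real) \<Rightarrow> bool" where
  "directly_implementable N A u \<mu> \<longleftrightarrow>
     (\<exists>\<eta> F. implements N A u A \<eta> F (\<lambda>i ai. point_mass ai) \<mu>)"

end

theory Submission
  imports Defs
begin

(* With obedient strategies the outcome is the data \<eta> itself and obedience of the belief is
   exactly the correlated-equilibrium condition, so \<mu> is directly implementable iff, for some
   constraint set F, the maximum-entropy belief q given data \<mu> is a correlated equilibrium.
   Such a q maximises entropy on the line through q and \<mu> (as far as it stays in the simplex).
   Moving mass onto a zero of q gains entropy of order -t ln t, so supp \<mu> \<subseteq> supp q; then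
   the line extends to both sides of q and the vanishing first derivative reads
   E_\<mu>[ln q] = E_q[ln q]. Conversely, for q in CE and \<mu> in I_q the constraints ln q and
   the indicator of {q = 0} cut out the distributions supported in supp q with cross entropy
   E_q[ln q] against q, among which q is the unique entropy maximiser by Gibbs' inequality. *)


(* x * ln z + x - z is the tangent of x \<mapsto> x * ln x at z. *)
lemma mult_ln_ge_tangent:
  fixes x z :: real
  assumes "0 < z" "0 \<le> x"
  shows "x * ln z + x - z \<le> x * ln x"
proof (cases "x = 0")
  case False
  then have "0 < x" using assms by simp
  then have "x * (ln z - ln x) \<le> z - x"
    using ln_diff_le[OF \<open>0 < z\<close>] by (simp add: field_simps)
  then show ?thesis by (simp add: algebra_simps)
qed (use assms in simp)

lemma mult_ln_gt_tangent:
  fixes x z :: real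
  assumes "0 < z" "0 \<le> x" "x \<noteq> z"
  shows "x * ln z + x - z < x * ln x"
proof (cases "x = 0")
  case False
  then have "0 < x" using assms by simp
  then have "x * (ln z - ln x) < z - x"
    using ln_diff_less[OF \<open>0 < z\<close>] assms(3) by (simp add: field_simps)
  then show ?thesis by (simp add: algebra_simps)
qed (use assms in simp)

lemma mult_ln_le_quadratic:
  fixes x h :: real
  assumes "0 < x" "0 \<le> x + h"
  shows "(x + h) * ln (x + h) \<le> x * ln x + h * (ln x + 1) + h\<^sup>2 / x"
proof (cases "x + h = 0")
  case True
  then have "h = - x" by simp
  then show ?thesis using assms by (simp add: power2_eq_square algebra_simps)
next
  case False
  then have "0 < x + h" using assms by simp
  have "(x + h) * (ln (x + h) - ln x) \<le> (x + h) * (h / x)"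
    using ln_diff_le[OF \<open>0 < x + h\<close> \<open>0 < x\<close>] \<open>0 < x + h\<close> by (intro mult_left_mono) auto
  also have "\<dots> = h + h\<^sup>2 / x" using assms by (simp add: field_simps power2_eq_square)
  finally show ?thesis by (simp add: algebra_simps)
qed

lemma mult_ln_convex_comb_le:
  fixes t x y :: real
  assumes "0 < t" "t < 1" "0 \<le> x" "0 \<le> y"
  shows "((1 - t) * x + t * y) * ln ((1 - t) * x + t * y)
           \<le> (1 - t) * (x * ln x) + t * (y * ln y) + t * ln t * (if x = 0 then y else 0)"
proof (cases "x = 0")
  case True
  then show ?thesis
    using assms by (cases "y = 0") (simp_all add: ln_mult algebra_simps)
next
  case False
  define p where "p = (1 - t) * x + t * y"
  have "0 < p" unfolding p_def using False assms by (simp add: add_pos_nonneg)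
  have "(1 - t) * (x * ln p + x - p) \<le> (1 - t) * (x * ln x)"
    using mult_ln_ge_tangent[OF \<open>0 < p\<close> \<open>0 \<le> x\<close>] assms by (intro mult_left_mono) auto
  moreover have "t * (y * ln p + y - p) \<le> t * (y * ln y)"
    using mult_ln_ge_tangent[OF \<open>0 < p\<close> \<open>0 \<le> y\<close>] assms by (intro mult_left_mono) auto
  moreover have "(1 - t) * (x * ln p + x - p) + t * (y * ln p + y - p) = p * ln p"
    unfolding p_def by (simp add: algebra_simps)
  ultimately show ?thesis using False by (simp add: p_def)
qed

lemma first_order_condition_at_zero:
  fixes L C :: real
  assumes "\<forall>\<^sub>F t in at 0. 0 \<le> t * L + t\<^sup>2 * C"
  shows "L = 0"
proof -
  have lim: "((\<lambda>t. L + t * C) \<longlongrightarrow> L) (at 0 within S)" for S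
    by (auto intro!: tendsto_eq_intros)
  have "\<forall>\<^sub>F t in at_right 0. 0 \<le> t * (L + t * C)" and "\<forall>\<^sub>F t in at_left 0. 0 \<le> t * (L + t * C)"
    using assms by (simp_all add: eventually_at_split power2_eq_square algebra_simps)
  then have "\<forall>\<^sub>F t in at_right 0. 0 \<le> L + t * C" and "\<forall>\<^sub>F t in at_left 0. L + t * C \<le> 0"
    using eventually_at_right_less[of "0::real"] eventually_at_leftI[of "-1" 0 "\<lambda>t::real. t < 0"]
    by (auto elim: eventually_elim2 simp: zero_le_mult_iff)
  then have "0 \<le> L" and "L \<le> 0"
    by (auto intro: tendsto_lowerbound[OF lim] tendsto_upperbound[OF lim])
  then show ?thesis by simp
qed

lemma dist_on_nonneg: "dist_on P p \<Longrightarrow> 0 \<le> p x"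
  and dist_on_outside: "dist_on P p \<Longrightarrow> x \<notin> P \<Longrightarrow> p x = 0"
  and dist_on_sum: "dist_on P p \<Longrightarrow> sum p P = 1"
  by (simp_all add: dist_on_def)

lemma dist_on_eqI:
  assumes "dist_on P p" "dist_on P q" "\<And>x. x \<in> P \<Longrightarrow> p x = q x"
  shows "p = q"
proof
  show "p x = q x" for x using assms by (cases "x \<in> P") (auto simp: dist_on_outside)
qed

lemma dist_on_point_mass: "finite S \<Longrightarrow> x \<in> S \<Longrightarrow> dist_on S (point_mass x)"
  unfolding dist_on_def point_mass_def by auto

definition affine_mix :: "real \<Rightarrow> ('x \<Rightarrow> real) \<Rightarrow> ('x \<Rightarrow> real) \<Rightarrow> 'x \<Rightarrow> real" where
  "affine_mix t q p x = q x + t * (p x - q x)"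

lemma affine_mix_convex_comb: "affine_mix t q p x = (1 - t) * q x + t * p x"
  by (simp add: affine_mix_def algebra_simps)

lemma dist_on_affine_mix:
  assumes "dist_on P q" "dist_on P p" "\<And>x. 0 \<le> affine_mix t q p x"
  shows "dist_on P (affine_mix t q p)"
  using assms unfolding dist_on_def affine_mix_def
  by (simp add: sum.distrib sum_subtractf flip: sum_distrib_left)

lemma dist_on_affine_mix_convex:
  assumes "dist_on P q" "dist_on P p" "0 \<le> t" "t \<le> 1"
  shows "dist_on P (affine_mix t q p)"
  using assms by (intro dist_on_affine_mix) (auto simp: affine_mix_convex_comb dist_on_nonneg)

lemma eventually_dist_on_affine_mix:
  assumes "finite P" "dist_on P q" "dist_on P p" "supp p \<subseteq> supp q"
  shows "\<forall>\<^sub>F t in at 0. dist_on P (affine_mix t q p)"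
proof -
  have "\<forall>\<^sub>F t in at 0. 0 \<le> affine_mix t q p x" if "x \<in> P" for x
  proof (cases "q x = 0")
    case True
    then have "p x = 0" using assms(4) by (auto simp: supp_def)
    then show ?thesis using True by (simp add: affine_mix_def)
  next
    case False
    then have "0 < q x" using dist_on_nonneg[OF assms(2)] by (simp add: order_less_le)
    moreover have "((\<lambda>t. affine_mix t q p x) \<longlongrightarrow> q x) (at 0)"
      unfolding affine_mix_def by (auto intro!: tendsto_eq_intros)
    ultimately have "\<forall>\<^sub>F t in at 0. 0 < affine_mix t q p x"
      by (intro order_tendstoD(1))
    then show ?thesis by eventually_elim simp
  qed
  then have "\<forall>\<^sub>F t in at 0. \<forall>x\<in>P. 0 \<le> affine_mix t q p x"
    using assms(1) by (simp add: eventually_ball_finite_distrib)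
  then show ?thesis
  proof eventually_elim
    case (elim t)
    have "0 \<le> affine_mix t q p x" for x
      using elim assms(2,3) by (cases "x \<in> P") (auto simp: affine_mix_def dist_on_outside)
    then show ?case by (rule dist_on_affine_mix[OF assms(2,3)])
  qed
qed

lemma entropy_less_of_cross_entropy_eq:
  assumes "finite P" "dist_on P p" "dist_on P q" "supp p \<subseteq> supp q" "p \<noteq> q"
    and cross: "(\<Sum>x\<in>P. p x * ln (q x)) = (\<Sum>x\<in>P. q x * ln (q x))"
  shows "entropy P p < entropy P q"
proof -
  define g where "g x = p x * ln (p x) - (p x * ln (q x) + p x - q x)" for x
  have g_nonneg: "0 \<le> g x" for x
  proof (cases "q x = 0")
    case True
    then have "p x = 0" using assms(4) by (auto simp: supp_def)
    then show ?thesis using True by (simp add: g_def)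
  next
    case False
    then have "0 < q x" using dist_on_nonneg[OF assms(3)] by (simp add: order_less_le)
    then show ?thesis using mult_ln_ge_tangent dist_on_nonneg[OF assms(2)] by (simp add: g_def)
  qed
  obtain a where "p a \<noteq> q a" using assms(5) by auto
  then have "a \<in> P" using assms(2,3) dist_on_outside by metis
  have "0 < q a"
    using \<open>p a \<noteq> q a\<close> assms(3,4) by (auto simp: supp_def order_less_le dist_on_nonneg)
  then have "0 < g a"
    using mult_ln_gt_tangent \<open>p a \<noteq> q a\<close> dist_on_nonneg[OF assms(2)] by (simp add: g_def)
  then have "0 < sum g P" using g_nonneg \<open>a \<in> P\<close> assms(1) by (intro sum_pos2) auto
  also have "sum g P = entropy P q - entropy P p"
    using cross assms(2,3)
    by (simp add: g_def entropy_def sum_subtractf sum.distrib dist_on_sum)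
  finally show ?thesis by simp
qed

lemma entropy_affine_mix_ge_convex:
  assumes "finite P" "dist_on P q" "dist_on P p" "0 < t" "t < 1"
  shows "(1 - t) * entropy P q + t * entropy P p - t * ln t * (\<Sum>x\<in>{x\<in>P. q x = 0}. p x)
           \<le> entropy P (affine_mix t q p)"
proof -
  have "(\<Sum>x\<in>P. affine_mix t q p x * ln (affine_mix t q p x))
      \<le> (\<Sum>x\<in>P. (1 - t) * (q x * ln (q x)) + t * (p x * ln (p x))
                   + t * ln t * (if q x = 0 then p x else 0))"
    using assms mult_ln_convex_comb_le
    by (intro sum_mono) (simp add: affine_mix_convex_comb dist_on_nonneg)
  also have "\<dots> = (1 - t) * (\<Sum>x\<in>P. q x * ln (q x)) + t * (\<Sum>x\<in>P. p x * ln (p x))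
                   + t * ln t * (\<Sum>x\<in>{x\<in>P. q x = 0}. p x)"
    using assms(1) by (simp add: sum.distrib sum.inter_filter sum_distrib_left mult.commute)
  finally show ?thesis by (simp add: entropy_def)
qed

lemma entropy_affine_mix_ge_quadratic:
  assumes "dist_on P q" "dist_on P p" "supp p \<subseteq> supp q" "dist_on P (affine_mix t q p)"
  shows "entropy P q - t * (\<Sum>x\<in>P. (p x - q x) * ln (q x)) - t\<^sup>2 * (\<Sum>x\<in>P. (p x - q x)\<^sup>2 / q x)
           \<le> entropy P (affine_mix t q p)"
proof -
  have pointwise: "affine_mix t q p x * ln (affine_mix t q p x)
      \<le> q x * ln (q x) + t * (p x - q x) * (ln (q x) + 1) + t\<^sup>2 * ((p x - q x)\<^sup>2 / q x)" for x
  proof (cases "q x = 0")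
    case True
    then have "p x = 0" using assms(3) by (auto simp: supp_def)
    then show ?thesis using True by (simp add: affine_mix_def)
  next
    case False
    then have "0 < q x" using dist_on_nonneg[OF assms(1)] by (simp add: order_less_le)
    moreover have "0 \<le> q x + t * (p x - q x)"
      using dist_on_nonneg[OF assms(4)] by (simp add: affine_mix_def)
    ultimately have "affine_mix t q p x * ln (affine_mix t q p x)
        \<le> q x * ln (q x) + t * (p x - q x) * (ln (q x) + 1) + (t * (p x - q x))\<^sup>2 / q x"
      unfolding affine_mix_def by (rule mult_ln_le_quadratic)
    then show ?thesis by (simp add: power_mult_distrib)
  qed
  have "(\<Sum>x\<in>P. affine_mix t q p x * ln (affine_mix t q p x))
      \<le> (\<Sum>x\<in>P. q x * ln (q x) + t * (p x - q x) * (ln (q x) + 1) + t\<^sup>2 * ((p x - q x)\<^sup>2 / q x))"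
    by (rule sum_mono) (rule pointwise)
  also have "\<dots> = (\<Sum>x\<in>P. q x * ln (q x)) + t * (\<Sum>x\<in>P. (p x - q x) * ln (q x))
                   + t * (\<Sum>x\<in>P. p x - q x) + t\<^sup>2 * (\<Sum>x\<in>P. (p x - q x)\<^sup>2 / q x)"
    by (simp add: sum.distrib sum_distrib_left ring_distribs mult.assoc)
  finally show ?thesis
    using assms(1,2) by (simp add: entropy_def sum_subtractf dist_on_sum)
qed

lemma supp_subset_of_entropy_max_on_line:
  assumes "finite P" "dist_on P q" "dist_on P p"
    and max: "\<And>t. dist_on P (affine_mix t q p) \<Longrightarrow> entropy P (affine_mix t q p) \<le> entropy P q"
  shows "supp p \<subseteq> supp q"
proof (rule ccontr)
  assume "\<not> supp p \<subseteq> supp q"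
  then obtain a where "p a \<noteq> 0" "q a = 0" by (auto simp: supp_def)
  then have "a \<in> P" using assms(3) dist_on_outside by metis
  define m where "m = (\<Sum>x\<in>{x\<in>P. q x = 0}. p x)"
  have "0 < m" unfolding m_def
    using assms(1) \<open>a \<in> P\<close> \<open>q a = 0\<close> \<open>p a \<noteq> 0\<close> dist_on_nonneg[OF assms(3)]
    by (intro sum_pos2[of _ a]) (auto simp: order_less_le)
  define D where "D = \<bar>entropy P q - entropy P p\<bar> + 1"
  define t where "t = exp (- D / m)"
  have "0 < D / m" using \<open>0 < m\<close> by (simp add: D_def add_pos_nonneg)
  then have "0 < t" "t < 1" and "ln t * m = - D"
    using \<open>0 < m\<close> by (auto simp: t_def)
  \<comment> \<open>t is chosen so that the entropy gain -t ln t m equals t D, more than the loss t (H q - H p).\<close>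
  have "(1 - t) * entropy P q + t * entropy P p - t * ln t * m \<le> entropy P (affine_mix t q p)"
    unfolding m_def by (rule entropy_affine_mix_ge_convex[OF assms(1-3) \<open>0 < t\<close> \<open>t < 1\<close>])
  also have "\<dots> \<le> entropy P q"
    using \<open>0 < t\<close> \<open>t < 1\<close> by (intro max dist_on_affine_mix_convex assms) auto
  finally have "(1 - t) * entropy P q + t * entropy P p + t * D \<le> entropy P q"
    using \<open>ln t * m = - D\<close> by (simp add: mult.assoc)
  then have "t * (entropy P p - entropy P q + D) \<le> 0" by (simp add: algebra_simps)
  moreover have "0 < t * (entropy P p - entropy P q + D)"
    using \<open>0 < t\<close> by (intro mult_pos_pos) (auto simp: D_def)
  ultimately show False by simp
qed

lemma cross_entropy_eq_of_entropy_max_on_line: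
  assumes "finite P" "dist_on P q" "dist_on P p" "supp p \<subseteq> supp q"
    and max: "\<And>t. dist_on P (affine_mix t q p) \<Longrightarrow> entropy P (affine_mix t q p) \<le> entropy P q"
  shows "(\<Sum>x\<in>P. p x * ln (q x)) = (\<Sum>x\<in>P. q x * ln (q x))"
proof -
  define L where "L = (\<Sum>x\<in>P. (p x - q x) * ln (q x))"
  define C where "C = (\<Sum>x\<in>P. (p x - q x)\<^sup>2 / q x)"
  have "\<forall>\<^sub>F t in at 0. 0 \<le> t * L + t\<^sup>2 * C"
    using eventually_dist_on_affine_mix[OF assms(1-4)]
  proof eventually_elim
    case (elim t)
    show ?case
      using entropy_affine_mix_ge_quadratic[OF assms(2-4) elim] max[OF elim]
      by (simp add: L_def C_def)
  qed
  then have "L = 0" by (rule first_order_condition_at_zero)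
  then show ?thesis by (simp add: L_def sum_subtractf left_diff_distrib)
qed

lemma affine_mix_in_Delta_D:
  assumes "q \<in> Delta_D N M \<eta> F" "p \<in> Delta_D N M \<eta> F" "dist_on (PiE N M) (affine_mix t q p)"
  shows "affine_mix t q p \<in> Delta_D N M \<eta> F"
  using assms unfolding Delta_D_def affine_mix_def
  by (simp add: ring_distribs sum.distrib sum_subtractf mult.assoc flip: sum_distrib_left)

lemma I_q_of_maxent_belief:
  assumes "finite (PiE N M)" "dist_on (PiE N M) \<eta>" "maxent_belief N M \<eta> F q"
  shows "\<eta> \<in> I_q N M q"
proof -
  have q: "q \<in> Delta_D N M \<eta> F" using assms(3) by (simp add: maxent_belief_def)
  then have "dist_on (PiE N M) q" by (simp add: Delta_D_def)
  have "\<eta> \<in> Delta_D N M \<eta> F" using assms(2) by (simp add: Delta_D_def)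
  then have max: "entropy (PiE N M) (affine_mix t q \<eta>) \<le> entropy (PiE N M) q"
    if "dist_on (PiE N M) (affine_mix t q \<eta>)" for t
    using assms(3) affine_mix_in_Delta_D[OF q _ that] unfolding maxent_belief_def
    by (metis order_le_less)
  have "supp \<eta> \<subseteq> supp q"
    by (rule supp_subset_of_entropy_max_on_line[OF assms(1) \<open>dist_on _ q\<close> assms(2) max])
  moreover have "(\<Sum>x\<in>PiE N M. \<eta> x * ln (q x)) = (\<Sum>x\<in>PiE N M. q x * ln (q x))"
    by (rule cross_entropy_eq_of_entropy_max_on_line[OF assms(1) \<open>dist_on _ q\<close> assms(2) _ max])
      fact
  ultimately show ?thesis using assms(2) by (simp add: I_q_def)
qed

lemma maxent_belief_of_I_q:
  assumes "finite (PiE N M)" "dist_on (PiE N M) q" "\<eta> \<in> I_q N M q"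
  shows "maxent_belief N M \<eta> {\<lambda>m. ln (q m), \<lambda>m. if q m = 0 then 1 else 0} q"
proof -
  let ?P = "PiE N M" and ?F = "{\<lambda>m. ln (q m), \<lambda>m. if q m = 0 then 1 else 0}"
  have mass_off_supp_q: "(\<Sum>m\<in>?P. p m * (if q m = 0 then 1 else 0)) = 0 \<longleftrightarrow> supp p \<subseteq> supp q"
    if "dist_on ?P p" for p
    using that assms(1) by (subst sum_nonneg_eq_0_iff) (auto simp: supp_def dist_on_def)
  have \<eta>: "dist_on ?P \<eta>" "supp \<eta> \<subseteq> supp q"
    "(\<Sum>m\<in>?P. \<eta> m * ln (q m)) = (\<Sum>m\<in>?P. q m * ln (q m))"
    using assms(3) by (auto simp: I_q_def)
  have "(\<Sum>m\<in>?P. \<eta> m * (if q m = 0 then 1 else 0)) = 0" using mass_off_supp_q \<eta> by blast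
  then have Delta_D_iff: "p \<in> Delta_D N M \<eta> ?F \<longleftrightarrow> dist_on ?P p \<and> supp p \<subseteq> supp q \<and>
      (\<Sum>m\<in>?P. p m * ln (q m)) = (\<Sum>m\<in>?P. q m * ln (q m))" for p
    using \<eta> mass_off_supp_q[of p] by (auto simp: Delta_D_def)
  show ?thesis
    unfolding maxent_belief_def
  proof (intro conjI ballI impI)
    show "q \<in> Delta_D N M \<eta> ?F" using Delta_D_iff assms(2) by simp
    fix p assume "p \<in> Delta_D N M \<eta> ?F" "p \<noteq> q"
    then show "entropy ?P p < entropy ?P q"
      using Delta_D_iff entropy_less_of_cross_entropy_eq[OF assms(1) _ assms(2)] by blast
  qed
qed

lemma prod_point_mass_PiE:
  assumes "finite N" "m \<in> PiE N A" "a \<in> PiE N A"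
  shows "(\<Prod>j\<in>N. point_mass (m j) (a j)) = (if m = a then 1 else 0)"
proof (cases "m = a")
  case False
  then obtain j where "j \<in> N" "m j \<noteq> a j" using PiE_ext[OF assms(2,3)] by blast
  then show ?thesis using assms(1) False by (auto simp: point_mass_def intro: prod_zero)
qed (simp add: point_mass_def)

lemma sum_point_mass_PiE:
  assumes "finite N" "\<forall>i\<in>N. finite (A i)" "a \<in> PiE N A"
  shows "(\<Sum>m\<in>PiE N A. f m * (\<Prod>j\<in>N. point_mass (m j) (a j))) = f a"
proof -
  have "(\<Sum>m\<in>PiE N A. f m * (\<Prod>j\<in>N. point_mass (m j) (a j)))
      = (\<Sum>m\<in>PiE N A. if m = a then f m else 0)"
    using prod_point_mass_PiE[OF assms(1) _ assms(3)] by (intro sum.cong) auto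
  then show ?thesis using assms by (simp add: finite_PiE)
qed

lemma mixed_util_point_mass:
  assumes "finite N" "\<forall>i\<in>N. finite (A i)" "m \<in> PiE N A"
  shows "mixed_util N A u i (\<lambda>j. point_mass (m j)) = u i m"
proof -
  have "mixed_util N A u i (\<lambda>j. point_mass (m j)) = (\<Sum>a\<in>PiE N A. if a = m then u i a else 0)"
    unfolding mixed_util_def using prod_point_mass_PiE[OF assms(1,3)] by (intro sum.cong) auto
  then show ?thesis using assms by (simp add: finite_PiE)
qed

lemma obedience_point_mass_iff_CE:
  assumes "finite_game N A" "dist_on (PiE N A) q"
  shows "(\<forall>i\<in>N. \<forall>mi\<in>A i. (\<Sum>m\<in>{m\<in>PiE N A. m i = mi}. q m) > 0 \<longrightarrow>
            (\<forall>a'\<in>A i. (\<Sum>m\<in>{m\<in>PiE N A. m i = mi}.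
               q m * (mixed_util N A u i (\<lambda>j. point_mass (m j))
                      - mixed_util N A u i ((\<lambda>j. point_mass (m j))(i := point_mass a')))) \<ge> 0))
         \<longleftrightarrow> q \<in> CE N A u"
proof -
  have fin: "finite N" "\<forall>i\<in>N. finite (A i)" using assms(1) by (auto simp: finite_game_def)
  have "mixed_util N A u i ((\<lambda>j. point_mass (m j))(i := point_mass b)) = u i (m(i := b))"
    if "m \<in> PiE N A" "i \<in> N" "b \<in> A i" for m i b
  proof -
    have upd: "(\<lambda>j. point_mass (m j))(i := point_mass b) = (\<lambda>j. point_mass ((m(i := b)) j))"
      by auto
    have "m(i := b) \<in> PiE N A"
      using PiE_fun_upd[of b A i m N] that by (simp add: insert_absorb)
    then show ?thesis unfolding upd by (rule mixed_util_point_mass[OF fin])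
  qed
  then have "(\<Sum>m\<in>{m\<in>PiE N A. m i = mi}. q m * (mixed_util N A u i (\<lambda>j. point_mass (m j))
                 - mixed_util N A u i ((\<lambda>j. point_mass (m j))(i := point_mass b))))
      = (\<Sum>m\<in>{m\<in>PiE N A. m i = mi}. q m * (u i m - u i (m(i := b))))"
    if "i \<in> N" "b \<in> A i" for i mi b
    using that mixed_util_point_mass[OF fin] by (intro sum.cong) auto
  then show ?thesis using assms(2) by (simp add: CE_def)
qed

lemma directly_implementable_iff_maxent_belief_CE:
  assumes "finite_game N A" "dist_on (PiE N A) \<mu>"
  shows "directly_implementable N A u \<mu> \<longleftrightarrow> (\<exists>F q. maxent_belief N A \<mu> F q \<and> q \<in> CE N A u)"
proof -
  have fin: "finite N" "\<forall>i\<in>N. finite (A i) \<and> A i \<noteq> {}" using assms(1) by (auto simp: finite_game_def)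
  have outcome: "\<eta> = \<mu>" if "dist_on (PiE N A) \<eta>"
    and "\<forall>a\<in>PiE N A. \<mu> a = (\<Sum>m\<in>PiE N A. \<eta> m * (\<Prod>j\<in>N. point_mass (m j) (a j)))" for \<eta>
    using fin sum_point_mass_PiE[of N A] dist_on_eqI[OF that(1) assms(2)] that(2) by auto
  have belief_dist: "dist_on (PiE N A) q" if "maxent_belief N A \<eta> F q" for \<eta> F q
    using that by (simp add: maxent_belief_def Delta_D_def)
  show ?thesis
  proof
    assume "directly_implementable N A u \<mu>"
    then obtain \<eta> F where impl: "implements N A u A \<eta> F (\<lambda>i ai. point_mass ai) \<mu>"
      unfolding directly_implementable_def by blast
    then have "\<eta> = \<mu>" using outcome unfolding implements_def by blast
    moreover obtain q where "maxent_belief N A \<eta> F q" "q \<in> CE N A u"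
      using impl obedience_point_mass_iff_CE[OF assms(1) belief_dist]
      unfolding implements_def by blast
    ultimately show "\<exists>F q. maxent_belief N A \<mu> F q \<and> q \<in> CE N A u" by blast
  next
    assume "\<exists>F q. maxent_belief N A \<mu> F q \<and> q \<in> CE N A u"
    then obtain F q where "maxent_belief N A \<mu> F q" "q \<in> CE N A u" by blast
    moreover have "\<forall>a\<in>PiE N A. \<mu> a = (\<Sum>m\<in>PiE N A. \<mu> m * (\<Prod>j\<in>N. point_mass (m j) (a j)))"
      using fin sum_point_mass_PiE[of N A] by auto
    moreover note obedience_point_mass_iff_CE[OF assms(1) belief_dist[OF \<open>maxent_belief _ _ _ _ _\<close>]]
    ultimately have "implements N A u A \<mu> F (\<lambda>i ai. point_mass ai) \<mu>"
      unfolding implements_def using fin assms(2)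
      by (intro conjI exI[of _ q]) (auto simp: dist_on_point_mass)
    then show "directly_implementable N A u \<mu>" unfolding directly_implementable_def by blast
  qed
qed

theorem proposition2:
  fixes N :: "'i set" and A :: "'i \<Rightarrow> 'a set"
    and u :: "'i \<Rightarrow> ('i \<Rightarrow> 'a) \<Rightarrow> real" and \<mu> :: "('i \<Rightarrow> 'a) \<Rightarrow> real"
  assumes "finite_game N A"
    and "dist_on (PiE N A) \<mu>"
  shows "directly_implementable N A u \<mu> \<longleftrightarrow> \<mu> \<in> I_set N A u"
proof -
  have fin: "finite (PiE N A)" using assms(1) by (simp add: finite_game_def finite_PiE)
  have CE_dist: "dist_on (PiE N A) q" if "q \<in> CE N A u" for q using that by (simp add: CE_def)
  have "directly_implementable N A u \<mu> \<longleftrightarrow> (\<exists>F q. maxent_belief N A \<mu> F q \<and> q \<in> CE N A u)"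
    by (rule directly_implementable_iff_maxent_belief_CE[OF assms])
  also have "\<dots> \<longleftrightarrow> (\<exists>q\<in>CE N A u. \<mu> \<in> I_q N A q)"
    using I_q_of_maxent_belief[OF fin assms(2)] maxent_belief_of_I_q[OF fin CE_dist] by blast
  also have "\<dots> \<longleftrightarrow> \<mu> \<in> I_set N A u" by (simp add: I_set_def)
  finally show ?thesis .
qed

end
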